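(* Let $q=q_1q_2\cdots q_k$ be a permutation of $\{1,\dots,k\}$ with $q_1<q_k$. Let $p=p_1\cdots p_n$ be a permutation that very tightly contains $q$ at two different starting positions $i$ and $i+j$ with $1\le j$, i.e. both $p_{i+1}\cdots p_{i+k}$ and $p_{i+j+1}\cdots p_{i+j+k}$ are very tight copies of $q$. Then these two copies occupy disjoint sets of positions (i.e. $j\ge k$) unless there exists a positive integer $s\le k-1$ such that (1) the rightmost $s$ entries $q_{k-s+1},\dots,q_k$ of $q$ are the $s$ largest entries of $q$, and the leftmost $s$ entries $q_1,\dots,q_s$ of $q$ are the $s$ smallest entries of $q$; and (2) the sequence $q_1\cdots q_s$ and the sequence $q_{k-s+1}\cdots q_k$ are order-isomorphic (form the same pattern).
   Context: For a permutation $p=p_1\cdots p_n$ and a permutation $q=q_1\cdots q_k$ with $k<n$, a very tight copy of $q$ in $p$ starting at position $i$ (with $0\le i\le n-k$) means: for all $1\le j,r\le k$, $q_j<q_r$ if and only if $p_{i+j}<p_{i+r}$, and moreover $\{p_{i+1},\dots,p_{i+k}\}=\{a+1,\dots,a+k\}$ for some integer $0\le a\le n-k$ (the entries are in consecutive positions and form an interval of integers). Two sequences are order-isomorphic if their entries compare in the same way position by position. *)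

theory Defs
  imports Main
begin

text \<open>Permutations of {1..n} are represented as functions nat => nat (1-indexed),
 restricted to {1..n}.\<close>

definition is_perm :: "nat \<Rightarrow> (nat \<Rightarrow> nat) \<Rightarrow> bool" where
  "is_perm n p \<longleftrightarrow> bij_betw p {1..n} {1..n}"

definition very_tight_copy_at ::
  "nat \<Rightarrow> (nat \<Rightarrow> nat) \<Rightarrow> nat \<Rightarrow> (nat \<Rightarrow> nat) \<Rightarrow> nat \<Rightarrow> bool" where
  "very_tight_copy_at k q n p i \<longleftrightarrow>
     i \<le> n - k \<and>
     (\<forall>j\<in>{1..k}. \<forall>r\<in>{1..k}. q j < q r \<longleftrightarrow> p (i + j) < p (i + r)) \<and>
     (\<exists>a. a \<le> n - k \<and> p ` {i+1..i+k} = {a+1..a+k})"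

definition order_iso :: "nat \<Rightarrow> (nat \<Rightarrow> nat) \<Rightarrow> (nat \<Rightarrow> nat) \<Rightarrow> bool" where
  "order_iso s f g \<longleftrightarrow> (\<forall>j\<in>{1..s}. \<forall>r\<in>{1..s}. f j < f r \<longleftrightarrow> g j < g r)"

end

theory Submission
  imports Defs
begin

text \<open>A very tight copy of q at position i is literally a translate: p (i + t) = a + q t,
  because an order-preserving bijection onto an interval is determined by ranks.
  Two copies at i and i + j with j < k overlap in positions, so their value intervals
  {a+1..a+k} and {b+1..b+k} must be at least j apart (the j + k overlapping positions
  take distinct values), and on the overlap q (j + t) and q t differ by the constant b - a.
  If b \<ge> a + j this shift sends the first k - j entries of q onto the last k - j
  ones, which forces both blocks to be the smallest and the largest values; if
  a \<ge> b + j the same argument makes the last block the smallest values, contradicting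
  q 1 < q k.\<close>

lemma bij_betw_interval_eq_rank:
  fixes f :: "nat \<Rightarrow> nat"
  assumes bij: "bij_betw f {1..k} {c+1..c+k}" and t: "t \<in> {1..k}"
  shows "f t = c + card {r\<in>{1..k}. f r \<le> f t}"
proof -
  have ft: "f t \<in> {c+1..c+k}" using bij t by (auto simp: bij_betw_def)
  let ?below = "{r\<in>{1..k}. f r \<le> f t}"
  have "f ` ?below = {c+1..f t}"
  proof
    show "f ` ?below \<subseteq> {c+1..f t}"
      using bij by (auto simp: bij_betw_def)
    show "{c+1..f t} \<subseteq> f ` ?below"
    proof
      fix y assume y: "y \<in> {c+1..f t}"
      then have "y \<in> f ` {1..k}" using ft bij by (auto simp: bij_betw_def)
      then show "y \<in> f ` ?below" using y by auto
    qed
  qed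
  moreover have "inj_on f ?below"
    using bij unfolding bij_betw_def by (rule inj_on_subset[OF conjunct1]) auto
  then have "card (f ` ?below) = card ?below" by (rule card_image)
  ultimately have "card ?below = card {c+1..f t}" by simp
  then show ?thesis using ft by simp
qed

lemma very_tight_copy_at_translate:
  assumes q: "is_perm k q" and p: "is_perm n p" and "k \<le> n"
    and copy: "very_tight_copy_at k q n p i"
  obtains a where "\<forall>t\<in>{1..k}. p (i + t) = a + q t"
    and "p ` {i+1..i+k} = {a+1..a+k}" and "i + k \<le> n"
proof -
  from copy obtain a where "i \<le> n - k"
    and ord: "\<forall>j\<in>{1..k}. \<forall>r\<in>{1..k}. q j < q r \<longleftrightarrow> p (i + j) < p (i + r)"
    and img: "p ` {i+1..i+k} = {a+1..a+k}"
    unfolding very_tight_copy_at_def by blast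
  with \<open>k \<le> n\<close> have ik: "i + k \<le> n" by simp
  define g where "g t = p (i + t)" for t
  have "g ` {1..k} = p ` ((+) i ` {1..k})"
    unfolding g_def by (simp only: image_image)
  also have "(+) i ` {1..k} = {i+1..i+k}" by simp
  finally have "g ` {1..k} = p ` {i+1..i+k}" .
  moreover have "inj_on g {1..k}"
  proof (rule inj_onI)
    fix x y assume "x \<in> {1..k}" "y \<in> {1..k}" "g x = g y"
    moreover have "inj_on p {1..n}" using p by (simp add: is_perm_def bij_betw_def)
    ultimately have "i + x = i + y"
      using ik unfolding g_def by (elim inj_onD) auto
    then show "x = y" by simp
  qed
  ultimately have g_bij: "bij_betw g {1..k} {a+1..a+k}"
    using img by (simp add: bij_betw_def)
  have q_bij: "bij_betw q {1..k} {0+1..0+k}" using q by (simp add: is_perm_def)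
  have "p (i + t) = a + q t" if t: "t \<in> {1..k}" for t
  proof -
    have "g r \<le> g t \<longleftrightarrow> q r \<le> q t" if "r \<in> {1..k}" for r
      using ord t that unfolding g_def by (meson not_le)
    then have "{r\<in>{1..k}. g r \<le> g t} = {r\<in>{1..k}. q r \<le> q t}" by blast
    then show ?thesis
      using bij_betw_interval_eq_rank[OF g_bij t] bij_betw_interval_eq_rank[OF q_bij t]
      unfolding g_def by simp
  qed
  then show ?thesis using that img ik by blast
qed

lemma overlapping_interval_images_far_apart:
  fixes p :: "nat \<Rightarrow> nat"
  assumes inj: "inj_on p {i+1..i+j+k}" and "j \<le> k"
    and A: "p ` {i+1..i+k} = {a+1..a+k}"
    and B: "p ` {i+j+1..i+j+k} = {b+1..b+k}"
  shows "a + j \<le> b \<or> b + j \<le> a"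
proof -
  have "{i+1..i+j+k} = {i+1..i+k} \<union> {i+j+1..i+j+k}" using \<open>j \<le> k\<close> by auto
  then have "p ` {i+1..i+j+k} = {a+1..a+k} \<union> {b+1..b+k}"
    using A B by (simp add: image_Un)
  then have "p ` {i+1..i+j+k} \<subseteq> {min a b + 1 .. max a b + k}"
    by auto
  then have "card (p ` {i+1..i+j+k}) \<le> card {min a b + 1 .. max a b + k}"
    by (rule card_mono[rotated]) simp
  moreover have "card (p ` {i+1..i+j+k}) = j + k" using inj by (simp add: card_image)
  ultimately show ?thesis by (auto simp: min_def max_def split: if_splits)
qed

lemma is_perm_image_eq_of_subset:
  assumes q: "is_perm k q" and A: "A \<subseteq> {1..k}" and "finite B"
    and sub: "q ` A \<subseteq> B" and "card B \<le> card A"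
  shows "q ` A = B"
proof -
  have "inj_on q A" using q A by (auto simp: is_perm_def bij_betw_def intro: inj_on_subset)
  then show ?thesis using assms by (intro card_seteq) (simp_all add: card_image)
qed

lemma is_perm_shift_up_blocks:
  assumes q: "is_perm k q" and "j < k" and "j \<le> d"
    and shift: "\<forall>t\<in>{1..k-j}. q (j + t) = q t + d"
  shows "q ` {1..k-j} = {1..k-j}" and "q ` {j+1..k} = {j+1..k}"
proof -
  have range: "q t \<in> {1..k}" if "t \<in> {1..k}" for t
    using q that by (auto simp: is_perm_def bij_betw_def)
  have "q ` {1..k-j} \<subseteq> {1..k-j}"
  proof
    fix y assume "y \<in> q ` {1..k-j}"
    then obtain t where t: "t \<in> {1..k-j}" "y = q t" by blast
    then have "1 \<le> q t" and "q t + d \<le> k"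
      using range[of t] range[of "j + t"] shift \<open>j < k\<close> by auto
    with t \<open>j \<le> d\<close> show "y \<in> {1..k-j}" by auto
  qed
  then show "q ` {1..k-j} = {1..k-j}"
    using \<open>j < k\<close> by (intro is_perm_image_eq_of_subset[OF q]) auto
  have "q ` {j+1..k} \<subseteq> {j+1..k}"
  proof
    fix y assume "y \<in> q ` {j+1..k}"
    then obtain x where x: "x \<in> {j+1..k}" "y = q x" by blast
    then have "x - j \<in> {1..k-j}" and "j + (x - j) = x" by auto
    then have "q x = q (x - j) + d"
      using shift[rule_format, OF \<open>x - j \<in> {1..k-j}\<close>] by simp
    moreover have "1 \<le> q (x - j)" and "q x \<le> k"
      using range \<open>x - j \<in> {1..k-j}\<close> x by auto
    ultimately show "y \<in> {j+1..k}" using x \<open>j \<le> d\<close> by auto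
  qed
  then show "q ` {j+1..k} = {j+1..k}"
    by (intro is_perm_image_eq_of_subset[OF q]) auto
qed

lemma is_perm_shift_down_last_below_first:
  assumes q: "is_perm k q" and "1 \<le> j" and "j < k" and "j \<le> d"
    and shift: "\<forall>t\<in>{1..k-j}. q t = q (j + t) + d"
  shows "q k < q 1"
proof -
  have range: "q t \<in> {1..k}" if "t \<in> {1..k}" for t
    using q that by (auto simp: is_perm_def bij_betw_def)
  have "q ` {j+1..k} \<subseteq> {1..k-j}"
  proof
    fix y assume "y \<in> q ` {j+1..k}"
    then obtain x where x: "x \<in> {j+1..k}" "y = q x" by blast
    then have "x - j \<in> {1..k-j}" and "j + (x - j) = x" by auto
    then have "q (x - j) = q x + d"
      using shift[rule_format, OF \<open>x - j \<in> {1..k-j}\<close>] by simp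
    moreover have "1 \<le> q x" and "q (x - j) \<le> k"
      using range \<open>x - j \<in> {1..k-j}\<close> x by auto
    ultimately show "y \<in> {1..k-j}" using x \<open>j \<le> d\<close> by auto
  qed
  then have last_block: "q ` {j+1..k} = {1..k-j}"
    by (intro is_perm_image_eq_of_subset[OF q]) auto
  have "inj_on q {1..k}" using q by (simp add: is_perm_def bij_betw_def)
  then have "q 1 \<notin> q ` {j+1..k}"
    using \<open>1 \<le> j\<close> \<open>j < k\<close> by (subst inj_on_image_mem_iff) auto
  then have "k - j < q 1" using last_block range[of 1] \<open>j < k\<close> by auto
  moreover have "q k \<le> k - j" using last_block \<open>j < k\<close> by auto
  ultimately show ?thesis by simp
qed

lemma overlapping_very_tight_copies_shift:
  assumes q: "is_perm k q" and p: "is_perm n p" and "k \<le> n" and "j < k"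
    and "very_tight_copy_at k q n p i" and "very_tight_copy_at k q n p (i + j)"
  obtains (up) d where "j \<le> d" and "\<forall>t\<in>{1..k-j}. q (j + t) = q t + d"
    | (down) d where "j \<le> d" and "\<forall>t\<in>{1..k-j}. q t = q (j + t) + d"
proof -
  obtain a where first: "\<forall>t\<in>{1..k}. p (i + t) = a + q t"
    and A: "p ` {i+1..i+k} = {a+1..a+k}" and "i + k \<le> n"
    by (rule very_tight_copy_at_translate[OF q p \<open>k \<le> n\<close> assms(5)])
  obtain b where second: "\<forall>t\<in>{1..k}. p (i + j + t) = b + q t"
    and B: "p ` {i+j+1..i+j+k} = {b+1..b+k}" and "i + j + k \<le> n"
    by (rule very_tight_copy_at_translate[OF q p \<open>k \<le> n\<close> assms(6)])
  have overlap: "a + q (j + t) = b + q t" if t: "t \<in> {1..k-j}" for t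
  proof -
    have "j + t \<in> {1..k}" and "t \<in> {1..k}" using t by auto
    then have "p (i + (j + t)) = a + q (j + t)" and "p (i + j + t) = b + q t"
      using first second by blast+
    then show ?thesis by (simp add: add.assoc)
  qed
  have "inj_on p {1..n}" using p by (simp add: is_perm_def bij_betw_def)
  then have "inj_on p {i+1..i+j+k}"
    by (rule inj_on_subset) (use \<open>i + j + k \<le> n\<close> in auto)
  then have "a + j \<le> b \<or> b + j \<le> a"
    using A B \<open>j < k\<close> by (intro overlapping_interval_images_far_apart) auto
  then show ?thesis
  proof
    assume "a + j \<le> b"
    with overlap show ?thesis by (intro up[of "b - a"]) fastforce+
  next
    assume "b + j \<le> a"
    with overlap show ?thesis by (intro down[of "a - b"]) fastforce+
  qed
qed

theorem proposition4p2:
  fixes k n i j :: nat and q p :: "nat \<Rightarrow> nat"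
  assumes "is_perm k q" and "is_perm n p" and "k < n"
    and "q 1 < q k"
    and "1 \<le> j"
    and "very_tight_copy_at k q n p i"
    and "very_tight_copy_at k q n p (i + j)"
  shows "k \<le> j \<or>
    (\<exists>s. 1 \<le> s \<and> s \<le> k - 1 \<and>
      q ` {k-s+1..k} = {k-s+1..k} \<and> q ` {1..s} = {1..s} \<and>
      order_iso s q (\<lambda>t. q (k - s + t)))"
proof (cases "k \<le> j")
  case False
  then have "j < k" by simp
  obtain d where "j \<le> d" and shift: "\<forall>t\<in>{1..k-j}. q (j + t) = q t + d"
  proof (rule overlapping_very_tight_copies_shift[OF assms(1,2) _ \<open>j < k\<close> assms(6,7)])
    fix d assume "j \<le> d" and "\<forall>t\<in>{1..k-j}. q t = q (j + t) + d"
    then have "q k < q 1"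
      by (rule is_perm_shift_down_last_below_first[OF assms(1,5) \<open>j < k\<close>])
    with \<open>q 1 < q k\<close> show ?thesis by simp
  qed (use \<open>k < n\<close> that in auto)
  have "order_iso (k - j) q (\<lambda>t. q (j + t))"
    using shift unfolding order_iso_def by simp
  moreover have "k - (k - j) = j" and "1 \<le> k - j" and "k - j \<le> k - 1"
    using \<open>1 \<le> j\<close> \<open>j < k\<close> by auto
  ultimately show ?thesis
    using is_perm_shift_up_blocks[OF assms(1) \<open>j < k\<close> \<open>j \<le> d\<close> shift]
    by (intro disjI2 exI[of _ "k - j"]) simp
qed simp

end
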